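(* Let $\mathcal{G} = (\mathcal{N}, \mathcal{I}, \mathcal{P}, n, p)$ be a PCFG and let $L \ge 1$. There exists a transformer model with hard attention modules, embedding dimension $(4|\mathcal{N}| + 1)L$, $2L-1$ layers, and $4|\mathcal{N}|$ attention heads in each layer, which simulates the Inside-Outside algorithm on every sentence of length at most $L$ generated by $\mathcal{G}$, in the sense that the final contextual embeddings contain (as coordinates) all inside probabilities $\alpha(A,i,j)$ and all outside probabilities $\beta(A,i,j)$ for every $A \in \mathcal{N}$ and every span $1 \le i \le j \le$ (sentence length).
   Context: A PCFG in Chomsky normal form is $\mathcal{G} = (\mathcal{N}, \mathcal{I}, \mathcal{P}, n, p)$: $\mathcal{N}$ is a finite set of non-terminals (with a start symbol $S$), partitioned into in-terminals $\mathcal{I}$ and pre-terminals $\mathcal{P}$; there is a vocabulary of $n$ words; $p$ assigns probabilities to rules $A \to BC$ ($A \in \mathcal{I}$, $B, C \in \mathcal{N}$) and $A \to w$ ($A \in \mathcal{P}$, $w$ a word), summing to $1$ over rules with the same left-hand side. For a sentence $w_1\cdots w_m$, the inside probability is $\alpha(A,i,j) = \Pr[A \Rightarrow^* w_i \cdots w_j]$ and the outside probability is $\beta(A,i,j) = \Pr[S \Rightarrow^* w_1\cdots w_{i-1}\, A\, w_{j+1}\cdots w_m]$; the Inside-Outside algorithm computes these by the recursions $\alpha(A,i,i)=\Pr[A\to w_i]$, $\alpha(A,i,j) = \sum_{B,C}\sum_{k=i}^{j-1} \Pr[A\to BC]\alpha(B,i,k)\alpha(C,k+1,j)$, $\beta(S,1,m)=1$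 (and $\beta(A,1,m)=0$ for $A\ne S$), $\beta(A,i,j)=\sum_{B,C}\sum_{k>j}\Pr[B\to AC]\beta(B,i,k)\alpha(C,j+1,k)+\sum_{B,C}\sum_{k<i}\Pr[B\to CA]\beta(B,k,j)\alpha(C,k,i-1)$. A transformer here maps input token/position embeddings $e_i^{(0)}\in\mathbb{R}^d$ through layers; in each layer, each head $h$ has matrices $K_h, Q_h, V_h$ and updates position $i$ additively (residually) by $\sum_j a^h_{i,j} V_h e^{(\ell)}_j$. Hard attention means the attention score is $a^h_{i,j} = \mathrm{ReLU}\big((K_h e_j^{(\ell)})^\top Q_h e_i^{(\ell)}\big)$ (softmax replaced by ReLU). *)

theory Defs
  imports Complex_Main
begin

text \<open>The words of the
  vocabulary are 0, ..., vocab - 1.  interm is the set of in-terminals; the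
  pre-terminals are the remaining non-terminals.  prule A B C = Pr[A -> B C],
  lrule A w = Pr[A -> w].\<close>

record 'nt pcfg =
  start :: 'nt
  interm :: "'nt set"
  vocab :: nat
  prule :: "'nt \<Rightarrow> 'nt \<Rightarrow> 'nt \<Rightarrow> real"
  lrule :: "'nt \<Rightarrow> nat \<Rightarrow> real"

definition is_pcfg :: "('nt::finite) pcfg \<Rightarrow> bool" where
  "is_pcfg G \<longleftrightarrow>
     (\<forall>A B C. prule G A B C \<ge> 0) \<and> (\<forall>A w. lrule G A w \<ge> 0) \<and>
     (\<forall>A B C. A \<notin> interm G \<longrightarrow> prule G A B C = 0) \<and>
     (\<forall>A w. A \<in> interm G \<or> w \<ge> vocab G \<longrightarrow> lrule G A w = 0) \<and>
     (\<forall>A \<in> interm G. (\<Sum>B\<in>UNIV. \<Sum>C\<in>UNIV. prule G A B C) = 1) \<and>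
     (\<forall>A. A \<notin> interm G \<longrightarrow> (\<Sum>w<vocab G. lrule G A w) = 1)"

section \<open>Inside and outside probabilities (positions are 1-indexed; word i is w ! (i-1))\<close>

text \<open>ins_len G w d A i = alpha(A, i, i+d).\<close>
fun ins_len :: "('nt::finite) pcfg \<Rightarrow> nat list \<Rightarrow> nat \<Rightarrow> 'nt \<Rightarrow> nat \<Rightarrow> real" where
  "ins_len G w 0 A i = (if 1 \<le> i \<and> i \<le> length w then lrule G A (w ! (i - 1)) else 0)"
| "ins_len G w (Suc d) A i =
     (\<Sum>B\<in>UNIV. \<Sum>C\<in>UNIV. \<Sum>k\<in>{0..d}.
        prule G A B C * ins_len G w k B i * ins_len G w (d - k) C (i + k + 1))"

definition inside :: "('nt::finite) pcfg \<Rightarrow> nat list \<Rightarrow> 'nt \<Rightarrow> nat \<Rightarrow> nat \<Rightarrow> real" where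
  "inside G w A i j = (if 1 \<le> i \<and> i \<le> j \<and> j \<le> length w then ins_len G w (j - i) A i else 0)"

function outside :: "('nt::finite) pcfg \<Rightarrow> nat list \<Rightarrow> 'nt \<Rightarrow> nat \<Rightarrow> nat \<Rightarrow> real" where
  "outside G w A i j =
     (if \<not> (1 \<le> i \<and> i \<le> j \<and> j \<le> length w) then 0
      else if i = 1 \<and> j = length w then (if A = start G then 1 else 0)
      else (\<Sum>B\<in>UNIV. \<Sum>C\<in>UNIV.
              (\<Sum>k\<in>{j+1..length w}. prule G B A C * outside G w B i k * inside G w C (j + 1) k)
            + (\<Sum>k\<in>{1..<i}. prule G B C A * outside G w B k j * inside G w C k (i - 1))))"
  by pat_completeness auto
termination
  by (relation "measure (\<lambda>(G, w, A, i, j). length w + i - j)") auto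

definition generated :: "('nt::finite) pcfg \<Rightarrow> nat list \<Rightarrow> bool" where
  "generated G w \<longleftrightarrow> w \<noteq> [] \<and> set w \<subseteq> {..<vocab G} \<and> inside G w (start G) 1 (length w) > 0"

text \<open>Vectors in R^d are functions nat => real of which the coordinates < d are used;
  d x d matrices are functions nat => nat => real.\<close>
type_synonym vec = "nat \<Rightarrow> real"
type_synonym mat = "nat \<Rightarrow> nat \<Rightarrow> real"

record head =
  Kmat :: mat
  Qmat :: mat
  Vmat :: mat

record transformer =
  tdim :: nat
  temb :: "nat \<Rightarrow> nat \<Rightarrow> vec"   \<comment> \<open>temb word position = input embedding e_i^(0)\<close>
  tlayers :: "head list list"

definition mvec :: "nat \<Rightarrow> mat \<Rightarrow> vec \<Rightarrow> vec" where
  "mvec d M x = (\<lambda>r. \<Sum>c<d. M r c * x c)"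

definition dotp :: "nat \<Rightarrow> vec \<Rightarrow> vec \<Rightarrow> real" where
  "dotp d x y = (\<Sum>c<d. x c * y c)"

definition relu :: "real \<Rightarrow> real" where
  "relu x = max 0 x"

definition layer_step :: "nat \<Rightarrow> nat \<Rightarrow> head list \<Rightarrow> (nat \<Rightarrow> vec) \<Rightarrow> (nat \<Rightarrow> vec)" where
  "layer_step d m hs e = (\<lambda>i r. e i r +
     (\<Sum>h\<leftarrow>hs. \<Sum>j\<in>{1..m}.
        relu (dotp d (mvec d (Kmat h) (e j)) (mvec d (Qmat h) (e i))) * mvec d (Vmat h) (e j) r))"

definition final_emb :: "transformer \<Rightarrow> nat list \<Rightarrow> nat \<Rightarrow> vec" where
  "final_emb T w =
     foldl (\<lambda>e hs. layer_step (tdim T) (length w) hs e)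
           (\<lambda>i. temb T (w ! (i - 1)) i) (tlayers T)"

end

theory Submission
  imports Defs
begin

text \<open>The inside and outside tables are fixpoints of two update maps: the inside update combines
  values of strictly shorter spans, the outside update values of strictly longer spans and inside
  values.  Iterated from the lexical probabilities, both maps reach the exact tables within 2L - 1
  steps, and one transformer layer performs one step of both.  As all entries are nonnegative, the
  ReLU score of a head can itself be a table entry; so one head per nonterminal and kind of rule
  application selects, for every split point, the partner row at the matching position and adds the
  products of rule probabilities and table entries.  A reset head turns the residual addition into
  an overwrite, and a boundary head supplies the initial value \<beta>(S, 1, m) = 1.\<close>

declare outside.simps [simp del]

section \<open>Inside and outside tables as fixpoints\<close>

lemma is_pcfg_nonneg:
  assumes "is_pcfg G"
  shows "0 \<le> prule G A B C" "0 \<le> lrule G A x"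
  using assms unfolding is_pcfg_def by auto

lemma inside_eq_0: "\<not> (1 \<le> i \<and> i \<le> j \<and> j \<le> length w) \<Longrightarrow> inside G w A i j = 0"
  unfolding inside_def by (rule if_not_P)

lemma inside_rec:
  assumes "1 \<le> i" "i < j" "j \<le> length w"
  shows "inside G w A i j =
    (\<Sum>B\<in>UNIV. \<Sum>C\<in>UNIV. \<Sum>k\<in>{i..<j}. prule G A B C * inside G w B i k * inside G w C (k + 1) j)"
proof -
  obtain d where d: "j - i = Suc d" using assms by (cases "j - i") auto
  have "inside G w A i j = ins_len G w (Suc d) A i"
    using assms d by (simp add: inside_def)
  also have "\<dots> = (\<Sum>B\<in>UNIV. \<Sum>C\<in>UNIV. \<Sum>k<Suc d.
      prule G A B C * inside G w B i (i + k) * inside G w C (i + k + 1) j)"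
  proof -
    have "inside G w B i (i + k) = ins_len G w k B i"
      and "inside G w C (i + k + 1) j = ins_len G w (d - k) C (i + k + 1)" if "k \<le> d" for B C k
      using assms d that by (auto simp: inside_def Suc_diff_Suc[symmetric] diff_diff_add)
    then show ?thesis by (simp add: atLeast0AtMost lessThan_Suc_atMost)
  qed
  also have "\<dots> = (\<Sum>B\<in>UNIV. \<Sum>C\<in>UNIV. \<Sum>k\<in>{i..<j}. prule G A B C * inside G w B i k * inside G w C (k + 1) j)"
    using d by (simp add: sum.atLeastLessThan_shift_0[of _ i j] atLeast0LessThan add.commute)
  finally show ?thesis .
qed

definition inside_base :: "('nt::finite) pcfg \<Rightarrow> nat list \<Rightarrow> 'nt \<Rightarrow> nat \<Rightarrow> nat \<Rightarrow> real" where
  "inside_base G w A i j = (if j = i then lrule G A (w ! (i - 1)) else 0)"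

definition inside_update ::
  "('nt::finite) pcfg \<Rightarrow> nat list \<Rightarrow> ('nt \<Rightarrow> nat \<Rightarrow> nat \<Rightarrow> real) \<Rightarrow> 'nt \<Rightarrow> nat \<Rightarrow> nat \<Rightarrow> real"
where
  "inside_update G w a A i j = inside_base G w A i j +
     (\<Sum>B\<in>UNIV. \<Sum>p\<in>{1..length w}.
        (if 2 \<le> p then a B i (p - 1) else 0) * (\<Sum>C\<in>UNIV. prule G A B C * a C p j))"

lemma inside_fixpoint:
  assumes "1 \<le> i" "i \<le> j" "j \<le> length w"
  shows "inside_update G w (inside G w) A i j = inside G w A i j"
proof -
  have split: "(\<Sum>p\<in>{1..length w}. (if 2 \<le> p then inside G w B i (p - 1) else 0) *
        (\<Sum>C\<in>UNIV. prule G A B C * inside G w C p j)) =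
      (\<Sum>C\<in>UNIV. \<Sum>k\<in>{i..<j}. prule G A B C * inside G w B i k * inside G w C (k + 1) j)" for B
  proof -
    have "(\<Sum>p\<in>{1..length w}. (if 2 \<le> p then inside G w B i (p - 1) else 0) *
          (\<Sum>C\<in>UNIV. prule G A B C * inside G w C p j)) =
        (\<Sum>p\<in>Suc ` {i..<j}. (if 2 \<le> p then inside G w B i (p - 1) else 0) *
          (\<Sum>C\<in>UNIV. prule G A B C * inside G w C p j))"
      by (rule sum.mono_neutral_right) (use assms in \<open>auto simp: inside_eq_0\<close>)
    also have "\<dots> = (\<Sum>k\<in>{i..<j}. inside G w B i k * (\<Sum>C\<in>UNIV. prule G A B C * inside G w C (k + 1) j))"
      using assms by (subst sum.reindex) auto
    also have "\<dots> = (\<Sum>C\<in>UNIV. \<Sum>k\<in>{i..<j}. prule G A B C * inside G w B i k * inside G w C (k + 1) j)"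
      by (simp add: sum_distrib_left mult_ac sum.swap[of _ "{i..<j}"])
    finally show ?thesis .
  qed
  show ?thesis
  proof (cases "i = j")
    case True
    then have "inside G w A i j = inside_base G w A i j"
      using assms by (simp add: inside_def inside_base_def)
    with True show ?thesis unfolding inside_update_def split by simp
  next
    case False
    with assms show ?thesis unfolding inside_update_def split by (simp add: inside_base_def inside_rec)
  qed
qed

text \<open>The sum over right siblings runs over all span ends up to L, as an attention head reads every
  labelled coordinate; the surplus terms vanish because the inside values there are 0.\<close>

definition outside_update ::
  "('nt::finite) pcfg \<Rightarrow> nat \<Rightarrow> nat list \<Rightarrow> ('nt \<Rightarrow> nat \<Rightarrow> nat \<Rightarrow> real) \<Rightarrow>
     ('nt \<Rightarrow> nat \<Rightarrow> nat \<Rightarrow> real) \<Rightarrow> 'nt \<Rightarrow> nat \<Rightarrow> nat \<Rightarrow> real"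
where
  "outside_update G L w a b A i j =
     (if i = 1 \<and> j = length w \<and> A = start G then 1 else 0) +
     (if j < length w
      then \<Sum>B\<in>UNIV. \<Sum>k\<in>{1..L}. b B i k * (\<Sum>C\<in>UNIV. prule G B A C * a C (j + 1) k)
      else 0) +
     (if 1 < i
      then \<Sum>C\<in>UNIV. \<Sum>p\<in>{1..length w}. a C p (i - 1) * (\<Sum>B\<in>UNIV. prule G B C A * b B p j)
      else 0)"

lemma outside_fixpoint:
  assumes "1 \<le> i" "i \<le> j" "j \<le> length w" "length w \<le> L"
  shows "outside_update G L w (inside G w) (outside G w) A i j = outside G w A i j"
proof -
  have right: "(if j < length w
      then \<Sum>B\<in>UNIV. \<Sum>k\<in>{1..L}. outside G w B i k * (\<Sum>C\<in>UNIV. prule G B A C * inside G w C (j + 1) k)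
      else 0) =
    (\<Sum>B\<in>UNIV. \<Sum>C\<in>UNIV. \<Sum>k\<in>{j+1..length w}. prule G B A C * outside G w B i k * inside G w C (j + 1) k)"
  proof (cases "j < length w")
    case True
    have "(\<Sum>k\<in>{1..L}. outside G w B i k * (\<Sum>C\<in>UNIV. prule G B A C * inside G w C (j + 1) k)) =
        (\<Sum>k\<in>{j+1..length w}. outside G w B i k * (\<Sum>C\<in>UNIV. prule G B A C * inside G w C (j + 1) k))" for B
      by (rule sum.mono_neutral_right) (use assms in \<open>auto simp: inside_eq_0\<close>)
    with True show ?thesis by (simp add: sum_distrib_left mult_ac) (rule sum.cong[OF refl], rule sum.swap)
  qed simp
  have left: "(if 1 < i
      then \<Sum>C\<in>UNIV. \<Sum>p\<in>{1..length w}. inside G w C p (i - 1) * (\<Sum>B\<in>UNIV. prule G B C A * outside G w B p j)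
      else 0) =
    (\<Sum>B\<in>UNIV. \<Sum>C\<in>UNIV. \<Sum>k\<in>{1..<i}. prule G B C A * outside G w B k j * inside G w C k (i - 1))"
  proof (cases "1 < i")
    case True
    have "(\<Sum>p\<in>{1..length w}. inside G w C p (i - 1) * (\<Sum>B\<in>UNIV. prule G B C A * outside G w B p j)) =
        (\<Sum>p\<in>{1..<i}. inside G w C p (i - 1) * (\<Sum>B\<in>UNIV. prule G B C A * outside G w B p j))" for C
      by (rule sum.mono_neutral_right) (use assms in \<open>auto simp: inside_eq_0\<close>)
    with True show ?thesis
      by (simp add: sum_distrib_left mult_ac sum.swap[where A = "{Suc 0..<i}"]) (rule sum.swap)
  qed (use assms in simp)
  show ?thesis
    using assms unfolding outside_update_def left right outside.simps[of G w A i j]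
    by (auto simp: sum.distrib)
qed

section \<open>Convergence of the iterated updates\<close>

fun inside_iter :: "('nt::finite) pcfg \<Rightarrow> nat list \<Rightarrow> nat \<Rightarrow> 'nt \<Rightarrow> nat \<Rightarrow> nat \<Rightarrow> real" where
  "inside_iter G w 0 = inside_base G w"
| "inside_iter G w (Suc t) = inside_update G w (inside_iter G w t)"

fun outside_iter :: "('nt::finite) pcfg \<Rightarrow> nat \<Rightarrow> nat list \<Rightarrow> nat \<Rightarrow> 'nt \<Rightarrow> nat \<Rightarrow> nat \<Rightarrow> real" where
  "outside_iter G L w 0 = (\<lambda>_ _ _. 0)"
| "outside_iter G L w (Suc t) = outside_update G L w (inside_iter G w t) (outside_iter G L w t)"

lemma inside_iter_nonneg:
  assumes "is_pcfg G"
  shows "0 \<le> inside_iter G w t A i j"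
proof (induction t arbitrary: A i j)
  case 0
  then show ?case using is_pcfg_nonneg[OF assms] by (simp add: inside_base_def)
next
  case (Suc t)
  then show ?case using is_pcfg_nonneg[OF assms]
    by (auto simp: inside_update_def inside_base_def intro!: add_nonneg_nonneg sum_nonneg mult_nonneg_nonneg)
qed

lemma outside_iter_nonneg:
  assumes "is_pcfg G"
  shows "0 \<le> outside_iter G L w t A i j"
proof (induction t arbitrary: A i j)
  case (Suc t)
  then show ?case using is_pcfg_nonneg[OF assms] inside_iter_nonneg[OF assms]
    by (auto simp: outside_update_def intro!: add_nonneg_nonneg sum_nonneg mult_nonneg_nonneg)
qed simp

lemma inside_iter_eq_0:
  assumes "i \<le> length w" "j < i \<or> length w < j"
  shows "inside_iter G w t A i j = 0"
  using assms
proof (induction t arbitrary: A i j)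
  case 0
  then show ?case by (auto simp: inside_base_def)
next
  case (Suc t)
  have "(if 2 \<le> p then inside_iter G w t B i (p - 1) else 0) *
      (\<Sum>C\<in>UNIV. prule G A B C * inside_iter G w t C p j) = 0" if "p \<le> length w" for B p
    using Suc that by (cases "p - 1 < i") auto
  then have "(\<Sum>B\<in>UNIV. \<Sum>p\<in>{1..length w}. (if 2 \<le> p then inside_iter G w t B i (p - 1) else 0) *
      (\<Sum>C\<in>UNIV. prule G A B C * inside_iter G w t C p j)) = 0"
    by (intro sum.neutral ballI) auto
  with Suc.prems show ?case
    unfolding inside_iter.simps inside_update_def inside_base_def by auto
qed

lemma inside_iter_eq_inside:
  assumes "1 \<le> i" "i \<le> length w" "j - i \<le> t"
  shows "inside_iter G w t A i j = inside G w A i j"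
  using assms
proof (induction t arbitrary: A i j)
  case 0
  then show ?case by (auto simp: inside_base_def inside_def)
next
  case (Suc t)
  show ?case
  proof (cases "i \<le> j \<and> j \<le> length w")
    case False
    then have "inside_iter G w (Suc t) A i j = 0"
      using Suc.prems by (intro inside_iter_eq_0) auto
    with False show ?thesis by (simp add: inside_eq_0)
  next
    case True
    let ?a = "inside_iter G w t"
    have "(if 2 \<le> p then ?a B i (p - 1) else 0) * (\<Sum>C\<in>UNIV. prule G A B C * ?a C p j) =
        (if 2 \<le> p then inside G w B i (p - 1) else 0) * (\<Sum>C\<in>UNIV. prule G A B C * inside G w C p j)"
      if p: "1 \<le> p" "p \<le> length w" for B p
    proof -
      consider "p \<le> i" | "i < p" "p \<le> j" | "j < p" by linarith
      then show ?thesis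
      proof cases
        case 1
        then have "?a B i (p - 1) = 0" "inside G w B i (p - 1) = 0"
          using Suc.IH[of i "p - 1" B] Suc.prems by (auto simp: inside_eq_0)
        then show ?thesis by simp
      next
        case 2
        then have "?a B i (p - 1) = inside G w B i (p - 1)" "?a C p j = inside G w C p j" for C
          using Suc.IH[of i "p - 1" B] Suc.IH[of p j C] Suc.prems p by auto
        then show ?thesis by simp
      next
        case 3
        then have "?a C p j = 0" "inside G w C p j = 0" for C
          using Suc.IH[of p j C] Suc.prems p by (auto simp: inside_eq_0)
        then show ?thesis by simp
      qed
    qed
    then have "inside_update G w ?a A i j = inside_update G w (inside G w) A i j"
      unfolding inside_update_def by (intro arg_cong2[where f = "(+)"] sum.cong refl) auto
    with True Suc.prems show ?thesis by (simp add: inside_fixpoint)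
  qed
qed

text \<open>The inside values used by the update are exact after L - 1 steps; from then on every step
  makes the outside values of one further span width exact, starting from the whole sentence.\<close>

lemma outside_iter_eq_outside:
  assumes "1 \<le> i" "i \<le> j" "j \<le> length w" "length w \<le> L" "length w + L \<le> t + (j - i) + 1"
  shows "outside_iter G L w t A i j = outside G w A i j"
  using assms
proof (induction t arbitrary: A i j)
  case (Suc t)
  let ?a = "inside_iter G w t" and ?b = "outside_iter G L w t" and ?m = "length w"
  have a_eq: "?a C p k = inside G w C p k" if "1 \<le> p" "p \<le> ?m" "k \<le> L" for C p k
    using that Suc.prems by (intro inside_iter_eq_inside) auto
  have right: "?b B i k * (\<Sum>C\<in>UNIV. prule G B A C * ?a C (j + 1) k) =
      outside G w B i k * (\<Sum>C\<in>UNIV. prule G B A C * inside G w C (j + 1) k)"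
    if "j < ?m" "k \<in> {1..L}" for B k
  proof (cases "j < k \<and> k \<le> ?m")
    case True
    then have "?b B i k = outside G w B i k" using Suc that by auto
    then show ?thesis using a_eq that by simp
  next
    case False
    then have "inside G w C (j + 1) k = 0" for C by (auto simp: inside_eq_0)
    then show ?thesis using a_eq that by simp
  qed
  have left: "?a C p (i - 1) * (\<Sum>B\<in>UNIV. prule G B C A * ?b B p j) =
      inside G w C p (i - 1) * (\<Sum>B\<in>UNIV. prule G B C A * outside G w B p j)"
    if "p \<in> {1..?m}" for C p
  proof (cases "p < i")
    case True
    then have "?b B p j = outside G w B p j" for B using Suc that by auto
    then show ?thesis using a_eq that Suc.prems by simp
  next
    case False
    then show ?thesis using a_eq that Suc.prems by (simp add: inside_eq_0)
  qed
  have "outside_update G L w ?a ?b A i j = outside_update G L w (inside G w) (outside G w) A i j"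
    unfolding outside_update_def using right left by (intro arg_cong2[where f = "(+)"] if_cong sum.cong refl) auto
  with Suc.prems show ?case by (simp add: outside_fixpoint)
qed simp

section \<open>Attention on labelled coordinates\<close>

definition lift_vec :: "('l \<Rightarrow> nat) \<Rightarrow> 'l set \<Rightarrow> ('l \<Rightarrow> real) \<Rightarrow> vec" where
  "lift_vec \<iota> \<Lambda> x c = (if c \<in> \<iota> ` \<Lambda> then x (inv_into \<Lambda> \<iota> c) else 0)"

definition lift_mat :: "('l \<Rightarrow> nat) \<Rightarrow> 'l set \<Rightarrow> ('l \<Rightarrow> 'l \<Rightarrow> real) \<Rightarrow> mat" where
  "lift_mat \<iota> \<Lambda> M r c =
     (if r \<in> \<iota> ` \<Lambda> \<and> c \<in> \<iota> ` \<Lambda> then M (inv_into \<Lambda> \<iota> r) (inv_into \<Lambda> \<iota> c) else 0)"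

definition lab_mvec :: "'l set \<Rightarrow> ('l \<Rightarrow> 'l \<Rightarrow> real) \<Rightarrow> ('l \<Rightarrow> real) \<Rightarrow> 'l \<Rightarrow> real" where
  "lab_mvec \<Lambda> M x l = (\<Sum>l'\<in>\<Lambda>. M l l' * x l')"

lemma lift_vec_at: "inj_on \<iota> \<Lambda> \<Longrightarrow> l \<in> \<Lambda> \<Longrightarrow> lift_vec \<iota> \<Lambda> x (\<iota> l) = x l"
  by (simp add: lift_vec_def)

lemma lift_vec_cong: "(\<And>l. l \<in> \<Lambda> \<Longrightarrow> x l = y l) \<Longrightarrow> lift_vec \<iota> \<Lambda> x = lift_vec \<iota> \<Lambda> y"
  unfolding lift_vec_def by (auto intro!: ext) (metis imageI inv_into_into)

lemma sum_lessThan_eq_sum_image: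
  assumes "inj_on \<iota> \<Lambda>" "\<iota> ` \<Lambda> \<subseteq> {..<d::nat}" "\<And>c. c \<notin> \<iota> ` \<Lambda> \<Longrightarrow> g c = 0"
  shows "(\<Sum>c<d. g c) = (\<Sum>l\<in>\<Lambda>. g (\<iota> l))"
proof -
  have "(\<Sum>c<d. g c) = (\<Sum>c\<in>\<iota> ` \<Lambda>. g c)"
    by (rule sum.mono_neutral_right) (use assms in auto)
  also have "\<dots> = (\<Sum>l\<in>\<Lambda>. g (\<iota> l))"
    using assms(1) by (simp add: sum.reindex)
  finally show ?thesis .
qed

lemma mvec_lift:
  assumes "inj_on \<iota> \<Lambda>" "\<iota> ` \<Lambda> \<subseteq> {..<d}"
  shows "mvec d (lift_mat \<iota> \<Lambda> M) (lift_vec \<iota> \<Lambda> x) = lift_vec \<iota> \<Lambda> (lab_mvec \<Lambda> M x)"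
proof
  fix r
  show "mvec d (lift_mat \<iota> \<Lambda> M) (lift_vec \<iota> \<Lambda> x) r = lift_vec \<iota> \<Lambda> (lab_mvec \<Lambda> M x) r"
  proof (cases "r \<in> \<iota> ` \<Lambda>")
    case True
    then obtain l where l: "l \<in> \<Lambda>" "r = \<iota> l" by auto
    have "mvec d (lift_mat \<iota> \<Lambda> M) (lift_vec \<iota> \<Lambda> x) r =
        (\<Sum>l'\<in>\<Lambda>. lift_mat \<iota> \<Lambda> M r (\<iota> l') * lift_vec \<iota> \<Lambda> x (\<iota> l'))"
      unfolding mvec_def using assms by (rule sum_lessThan_eq_sum_image) (simp add: lift_vec_def)
    also have "\<dots> = lab_mvec \<Lambda> M x l"
      using assms l by (simp add: lab_mvec_def lift_mat_def lift_vec_def)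
    finally show ?thesis using assms l by (simp add: lift_vec_at)
  qed (simp add: mvec_def lift_mat_def lift_vec_def)
qed

lemma dotp_lift:
  assumes "inj_on \<iota> \<Lambda>" "\<iota> ` \<Lambda> \<subseteq> {..<d}"
  shows "dotp d (lift_vec \<iota> \<Lambda> x) (lift_vec \<iota> \<Lambda> y) = (\<Sum>l\<in>\<Lambda>. x l * y l)"
proof -
  have "dotp d (lift_vec \<iota> \<Lambda> x) (lift_vec \<iota> \<Lambda> y) = (\<Sum>l\<in>\<Lambda>. lift_vec \<iota> \<Lambda> x (\<iota> l) * lift_vec \<iota> \<Lambda> y (\<iota> l))"
    unfolding dotp_def using assms by (rule sum_lessThan_eq_sum_image) (simp add: lift_vec_def)
  with assms(1) show ?thesis by (simp add: lift_vec_at)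
qed

record 'l lab_head =
  lkey :: "'l \<Rightarrow> 'l \<Rightarrow> real"
  lquery :: "'l \<Rightarrow> 'l \<Rightarrow> real"
  lvalue :: "'l \<Rightarrow> 'l \<Rightarrow> real"

definition lift_head :: "('l \<Rightarrow> nat) \<Rightarrow> 'l set \<Rightarrow> 'l lab_head \<Rightarrow> head" where
  "lift_head \<iota> \<Lambda> h =
     \<lparr>Kmat = lift_mat \<iota> \<Lambda> (lkey h), Qmat = lift_mat \<iota> \<Lambda> (lquery h), Vmat = lift_mat \<iota> \<Lambda> (lvalue h)\<rparr>"

definition lab_attn :: "'l set \<Rightarrow> nat \<Rightarrow> 'l lab_head \<Rightarrow> (nat \<Rightarrow> 'l \<Rightarrow> real) \<Rightarrow> nat \<Rightarrow> 'l \<Rightarrow> real" where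
  "lab_attn \<Lambda> m h x i l = (\<Sum>j\<in>{1..m}.
     relu (\<Sum>l'\<in>\<Lambda>. lab_mvec \<Lambda> (lkey h) (x j) l' * lab_mvec \<Lambda> (lquery h) (x i) l') *
     lab_mvec \<Lambda> (lvalue h) (x j) l)"

lemma layer_step_lift:
  assumes "inj_on \<iota> \<Lambda>" "\<iota> ` \<Lambda> \<subseteq> {..<d}"
  shows "layer_step d m (map (lift_head \<iota> \<Lambda>) hs) (\<lambda>i. lift_vec \<iota> \<Lambda> (x i)) i =
    lift_vec \<iota> \<Lambda> (\<lambda>l. x i l + (\<Sum>h\<leftarrow>hs. lab_attn \<Lambda> m h x i l))"
proof
  fix r
  show "layer_step d m (map (lift_head \<iota> \<Lambda>) hs) (\<lambda>i. lift_vec \<iota> \<Lambda> (x i)) i r =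
      lift_vec \<iota> \<Lambda> (\<lambda>l. x i l + (\<Sum>h\<leftarrow>hs. lab_attn \<Lambda> m h x i l)) r"
    using assms
    by (cases "r \<in> \<iota> ` \<Lambda>")
      (auto simp: layer_step_def lift_head_def lab_attn_def mvec_lift dotp_lift lift_vec_at o_def,
       simp_all add: lift_vec_def)
qed

lemma layer_step_cong:
  assumes "\<And>j. j \<in> {1..m} \<Longrightarrow> e j = e' j" "i \<in> {1..m}"
  shows "layer_step d m hs e i = layer_step d m hs e' i"
proof -
  have "e i = e' i" using assms by auto
  moreover have "map (\<lambda>h. \<Sum>j\<in>{1..m}. relu (dotp d (mvec d (Kmat h) (e j)) (mvec d (Qmat h) (e i))) *
        mvec d (Vmat h) (e j) r) hs =
      map (\<lambda>h. \<Sum>j\<in>{1..m}. relu (dotp d (mvec d (Kmat h) (e' j)) (mvec d (Qmat h) (e i))) *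
        mvec d (Vmat h) (e' j) r) hs" for r
    using assms(1) by (intro map_cong sum.cong refl) auto
  ultimately show ?thesis unfolding layer_step_def by (intro ext) (simp only:)
qed

lemma foldl_layer_step_lift:
  assumes "inj_on \<iota> \<Lambda>" "\<iota> ` \<Lambda> \<subseteq> {..<d}"
    and step: "\<And>t i l. i \<in> {1..m} \<Longrightarrow> l \<in> \<Lambda> \<Longrightarrow>
      x t i l + (\<Sum>h\<leftarrow>hs. lab_attn \<Lambda> m h (x t) i l) = x (Suc t) i l"
    and "i \<in> {1..m}"
  shows "foldl (\<lambda>e hs. layer_step d m hs e) (\<lambda>i. lift_vec \<iota> \<Lambda> (x 0 i))
      (replicate t (map (lift_head \<iota> \<Lambda>) hs)) i = lift_vec \<iota> \<Lambda> (x t i)"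
  using assms(4)
proof (induction t arbitrary: i)
  case (Suc t)
  have "foldl (\<lambda>e hs. layer_step d m hs e) (\<lambda>i. lift_vec \<iota> \<Lambda> (x 0 i))
      (replicate (Suc t) (map (lift_head \<iota> \<Lambda>) hs)) i =
    layer_step d m (map (lift_head \<iota> \<Lambda>) hs) (\<lambda>i. lift_vec \<iota> \<Lambda> (x t i)) i"
    unfolding replicate_Suc replicate_append_same[symmetric] foldl_append foldl.simps
    using Suc by (intro layer_step_cong) auto
  also have "\<dots> = lift_vec \<iota> \<Lambda> (x (Suc t) i)"
    using Suc.prems by (simp only: layer_step_lift[OF assms(1,2)]) (rule lift_vec_cong, simp add: step)
  finally show ?case .
qed simp

section \<open>Simulating one step of the iteration by one layer\<close>

datatype 'nt lab = Pos nat | Ins 'nt nat | Out 'nt nat | Lex 'nt nat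

definition labels :: "nat \<Rightarrow> ('nt::finite) lab set" where
  "labels L = Pos ` {1..L} \<union> (\<lambda>(A, j). Ins A j) ` (UNIV \<times> {1..L}) \<union>
     (\<lambda>(A, j). Out A j) ` (UNIV \<times> {1..L}) \<union> (\<lambda>(A, j). Lex A j) ` (UNIV \<times> {1..L})"

lemma mem_labels [simp]:
  "Pos p \<in> labels L \<longleftrightarrow> p \<in> {1..L}" "Ins A j \<in> labels L \<longleftrightarrow> j \<in> {1..L}"
  "Out A j \<in> labels L \<longleftrightarrow> j \<in> {1..L}" "Lex A j \<in> labels L \<longleftrightarrow> j \<in> {1..L}"
  unfolding labels_def by auto

lemma finite_labels [simp]: "finite (labels L)"
  unfolding labels_def by auto

lemma sum_labels:
  "(\<Sum>l\<in>labels L. f l) = (\<Sum>p=1..L. f (Pos p)) + (\<Sum>A\<in>UNIV. \<Sum>j=1..L. f (Ins A j)) +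
     (\<Sum>A\<in>UNIV. \<Sum>j=1..L. f (Out A j)) + (\<Sum>A\<in>UNIV. \<Sum>j=1..L. f (Lex A j))"
proof -
  have inj: "inj_on Pos X" "inj_on (\<lambda>(A, j). Ins A j) Y" "inj_on (\<lambda>(A, j). Out A j) Y"
    "inj_on (\<lambda>(A, j). Lex A j) Y" for X and Y :: "('nt \<times> nat) set"
    by (auto simp: inj_on_def)
  have "(\<Sum>l\<in>labels L. f l) = sum f (Pos ` {1..L}) + sum f ((\<lambda>(A, j). Ins A j) ` (UNIV \<times> {1..L})) +
      sum f ((\<lambda>(A, j). Out A j) ` (UNIV \<times> {1..L})) + sum f ((\<lambda>(A, j). Lex A j) ` (UNIV \<times> {1..L}))"
    unfolding labels_def by (subst sum.union_disjoint; auto)+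
  then show ?thesis
    unfolding sum.reindex[OF inj(1)] sum.reindex[OF inj(2)] sum.reindex[OF inj(3)] sum.reindex[OF inj(4)]
    by (simp add: sum.cartesian_product split_def)
qed

lemma card_labels: "card (labels L :: ('nt::finite) lab set) \<le> (3 * card (UNIV :: 'nt set) + 1) * L"
proof -
  have "card (labels L :: 'nt lab set) \<le> card (Pos ` {1..L} :: 'nt lab set) +
      card ((\<lambda>(A, j). Ins A j) ` (UNIV \<times> {1..L}) :: 'nt lab set) +
      card ((\<lambda>(A, j). Out A j) ` (UNIV \<times> {1..L}) :: 'nt lab set) +
      card ((\<lambda>(A, j). Lex A j) ` (UNIV \<times> {1..L}) :: 'nt lab set)"
    unfolding labels_def by (intro card_Un_le[THEN order_trans] add_mono order_refl)
  also have "\<dots> \<le> L + card (UNIV :: 'nt set) * L + card (UNIV :: 'nt set) * L + card (UNIV :: 'nt set) * L"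
    by (intro add_mono card_image_le[THEN order_trans]) (auto simp: card_cartesian_product)
  finally show ?thesis by (simp add: algebra_simps)
qed

lemma if_0_times: "(if P then a else 0) * (x::real) = (if P then a * x else 0)"
  and times_if_0: "(x::real) * (if P then a else 0) = (if P then x * a else 0)"
  and sum_if_0: "(\<Sum>k\<in>S. if P then f k else 0) = (if P then (\<Sum>k\<in>S. f k) else (0::real))"
  by simp_all

lemmas delta_simps = if_0_times times_if_0 sum_if_0

text \<open>At position i, the coordinates Ins A j and Out A j hold the current approximations of
  \<alpha>(A, i, j) and \<beta>(A, i, j), Lex A j holds the lexical part of \<alpha>(A, i, j), and Pos is the one-hot
  encoding of i used to address other positions.\<close>

fun state_emb ::
  "('nt::finite) pcfg \<Rightarrow> nat list \<Rightarrow> ('nt \<Rightarrow> nat \<Rightarrow> nat \<Rightarrow> real) \<Rightarrow> ('nt \<Rightarrow> nat \<Rightarrow> nat \<Rightarrow> real) \<Rightarrow>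
     nat \<Rightarrow> 'nt lab \<Rightarrow> real"
where
  "state_emb G w a b i (Pos p) = (if p = i then 1 else 0)"
| "state_emb G w a b i (Ins A j) = a A i j"
| "state_emb G w a b i (Out A j) = b A i j"
| "state_emb G w a b i (Lex A j) = inside_base G w A i j"

definition inside_head :: "('nt::finite) pcfg \<Rightarrow> 'nt \<Rightarrow> 'nt lab lab_head" where
  "inside_head G B = \<lparr>
     lkey = (\<lambda>l l'. case l of Ins B' k \<Rightarrow> if B' = B then if l' = Pos (k + 1) then 1 else 0 else 0 | _ \<Rightarrow> 0),
     lquery = (\<lambda>l l'. case l of Ins B' k \<Rightarrow> if B' = B then if l' = l then 1 else 0 else 0 | _ \<Rightarrow> 0),
     lvalue = (\<lambda>l l'. case (l, l') of (Ins A j, Ins C j') \<Rightarrow> if j' = j then prule G A B C else 0 | _ \<Rightarrow> 0)\<rparr>"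

lemma inside_head_attn:
  assumes "length w \<le> L" "\<And>A i j. 0 \<le> a A i j"
  shows "lab_attn (labels L) (length w) (inside_head G B) (state_emb G w a b) i l =
    (case l of
      Ins A j \<Rightarrow> if j \<in> {1..L} then \<Sum>p\<in>{1..length w}.
        (if 2 \<le> p then a B i (p - 1) else 0) * (\<Sum>C\<in>UNIV. prule G A B C * a C p j) else 0
    | _ \<Rightarrow> 0)"
proof -
  let ?x = "state_emb G w a b" and ?h = "inside_head G B"
  have key: "lab_mvec (labels L) (lkey ?h) (?x p) l' =
      (case l' of Ins B' k \<Rightarrow> if B' = B \<and> k + 1 \<le> L \<and> p = k + 1 then 1 else 0 | _ \<Rightarrow> 0)" for p l'
    by (cases l') (auto simp: lab_mvec_def sum_labels inside_head_def delta_simps)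
  have query: "lab_mvec (labels L) (lquery ?h) (?x i) l' =
      (case l' of Ins B' k \<Rightarrow> if B' = B \<and> k \<in> {1..L} then a B i k else 0 | _ \<Rightarrow> 0)" for l'
    by (cases l') (auto simp: lab_mvec_def inside_head_def delta_simps)
  have val: "lab_mvec (labels L) (lvalue ?h) (?x p) l =
      (case l of Ins A j \<Rightarrow> if j \<in> {1..L} then \<Sum>C\<in>UNIV. prule G A B C * a C p j else 0 | _ \<Rightarrow> 0)" for p l
    by (cases l) (auto simp: lab_mvec_def sum_labels inside_head_def delta_simps)
  have score: "(\<Sum>l'\<in>labels L. lab_mvec (labels L) (lkey ?h) (?x p) l' * lab_mvec (labels L) (lquery ?h) (?x i) l') =
      (if 2 \<le> p then a B i (p - 1) else 0)" if "p \<in> {1..L}" for p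
  proof -
    have "(\<Sum>k=1..L. if Suc k \<le> L \<and> p = Suc k then 1 * a B i k else 0) =
        (\<Sum>k=1..L. if k = p - 1 then (if 2 \<le> p then a B i k else 0) else 0)"
      using that by (intro sum.cong) auto
    with that show ?thesis by (auto simp: sum_labels key query delta_simps)
  qed
  show ?thesis
    unfolding lab_attn_def using assms
    by (cases l) (simp_all add: score val relu_def delta_simps)
qed

definition outside_left_head :: "('nt::finite) pcfg \<Rightarrow> 'nt \<Rightarrow> 'nt lab lab_head" where
  "outside_left_head G A = \<lparr>
     lkey = (\<lambda>l l'. case (l, l') of (Out B k, Ins C k') \<Rightarrow> if k' = k then prule G B A C else 0 | _ \<Rightarrow> 0),
     lquery = (\<lambda>l l'. case l of Out B k \<Rightarrow> if l' = l then 1 else 0 | _ \<Rightarrow> 0),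
     lvalue = (\<lambda>l l'. case l of Out A' j \<Rightarrow> if A' = A then if l' = Pos (j + 1) then 1 else 0 else 0 | _ \<Rightarrow> 0)\<rparr>"

lemma outside_left_head_attn:
  assumes "is_pcfg G" "length w \<le> L" "\<And>A i j. 0 \<le> a A i j" "\<And>A i j. 0 \<le> b A i j"
  shows "lab_attn (labels L) (length w) (outside_left_head G A) (state_emb G w a b) i l =
    (case l of
      Out A' j \<Rightarrow> if A' = A then if j < length w
        then \<Sum>B\<in>UNIV. \<Sum>k\<in>{1..L}. b B i k * (\<Sum>C\<in>UNIV. prule G B A C * a C (j + 1) k) else 0 else 0
    | _ \<Rightarrow> 0)"
proof -
  let ?x = "state_emb G w a b" and ?h = "outside_left_head G A"
  let ?s = "\<lambda>p. \<Sum>B\<in>UNIV. \<Sum>k\<in>{1..L}. b B i k * (\<Sum>C\<in>UNIV. prule G B A C * a C p k)"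
  have key: "lab_mvec (labels L) (lkey ?h) (?x p) l' =
      (case l' of Out B k \<Rightarrow> if k \<in> {1..L} then \<Sum>C\<in>UNIV. prule G B A C * a C p k else 0 | _ \<Rightarrow> 0)" for p l'
    by (cases l') (auto simp: lab_mvec_def sum_labels outside_left_head_def delta_simps)
  have query: "lab_mvec (labels L) (lquery ?h) (?x i) l' =
      (case l' of Out B k \<Rightarrow> if k \<in> {1..L} then b B i k else 0 | _ \<Rightarrow> 0)" for l'
    by (cases l') (auto simp: lab_mvec_def outside_left_head_def delta_simps)
  have val: "lab_mvec (labels L) (lvalue ?h) (?x p) l =
      (case l of Out A' j \<Rightarrow> if A' = A \<and> j + 1 \<le> L \<and> p = j + 1 then 1 else 0 | _ \<Rightarrow> 0)" for p l
    by (cases l) (auto simp: lab_mvec_def outside_left_head_def delta_simps)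
  have score: "(\<Sum>l'\<in>labels L. lab_mvec (labels L) (lkey ?h) (?x p) l' * lab_mvec (labels L) (lquery ?h) (?x i) l') = ?s p"
    for p by (auto simp: sum_labels key query delta_simps mult.commute intro!: sum.cong)
  have "0 \<le> ?s p" for p
    using assms(1,3,4) by (intro sum_nonneg mult_nonneg_nonneg) (auto simp: is_pcfg_nonneg)
  then show ?thesis
    unfolding lab_attn_def using assms(2)
    by (cases l) (auto simp: score val relu_def delta_simps)
qed

definition outside_right_head :: "('nt::finite) pcfg \<Rightarrow> 'nt \<Rightarrow> 'nt lab lab_head" where
  "outside_right_head G C = \<lparr>
     lkey = (\<lambda>l l'. case l of Ins C' k \<Rightarrow> if C' = C then if l' = l then 1 else 0 else 0 | _ \<Rightarrow> 0),
     lquery = (\<lambda>l l'. case l of Ins C' k \<Rightarrow> if C' = C then if l' = Pos (k + 1) then 1 else 0 else 0 | _ \<Rightarrow> 0),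
     lvalue = (\<lambda>l l'. case (l, l') of (Out A j, Out B j') \<Rightarrow> if j' = j then prule G B C A else 0 | _ \<Rightarrow> 0)\<rparr>"

lemma outside_right_head_attn:
  assumes "\<And>A i j. 0 \<le> a A i j" "i \<in> {1..L}"
  shows "lab_attn (labels L) (length w) (outside_right_head G C) (state_emb G w a b) i l =
    (case l of
      Out A j \<Rightarrow> if j \<in> {1..L} \<and> 1 < i
        then \<Sum>p\<in>{1..length w}. a C p (i - 1) * (\<Sum>B\<in>UNIV. prule G B C A * b B p j) else 0
    | _ \<Rightarrow> 0)"
proof -
  let ?x = "state_emb G w a b" and ?h = "outside_right_head G C"
  have key: "lab_mvec (labels L) (lkey ?h) (?x p) l' =
      (case l' of Ins C' k \<Rightarrow> if C' = C then if k \<in> {1..L} then a C p k else 0 else 0 | _ \<Rightarrow> 0)" for p l'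
    by (cases l') (auto simp: lab_mvec_def outside_right_head_def delta_simps)
  have query: "lab_mvec (labels L) (lquery ?h) (?x i) l' =
      (case l' of Ins C' k \<Rightarrow> if C' = C then if k + 1 \<le> L \<and> i = k + 1 then 1 else 0 else 0 | _ \<Rightarrow> 0)" for l'
    by (cases l') (auto simp: lab_mvec_def outside_right_head_def delta_simps)
  have val: "lab_mvec (labels L) (lvalue ?h) (?x p) l =
      (case l of Out A j \<Rightarrow> if j \<in> {1..L} then \<Sum>B\<in>UNIV. prule G B C A * b B p j else 0 | _ \<Rightarrow> 0)" for p l
    by (cases l) (auto simp: lab_mvec_def sum_labels outside_right_head_def delta_simps)
  have score: "(\<Sum>l'\<in>labels L. lab_mvec (labels L) (lkey ?h) (?x p) l' * lab_mvec (labels L) (lquery ?h) (?x i) l') =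
      (if 1 < i then a C p (i - 1) else 0)" for p
  proof -
    have "(\<Sum>k=1..L. if Suc k \<le> L \<and> i = Suc k then a C p k * 1 else 0) =
        (\<Sum>k=1..L. if k = i - 1 then (if 1 < i then a C p k else 0) else 0)"
      using assms(2) by (intro sum.cong) auto
    with assms(2) show ?thesis by (auto simp: sum_labels key query delta_simps)
  qed
  show ?thesis
    unfolding lab_attn_def using assms
    by (cases l) (simp_all add: score val relu_def delta_simps)
qed

text \<open>Attention can only add to the residual stream; this head subtracts the old approximations and
  adds the lexical part, so that the layer overwrites the approximations by their update.\<close>

definition reset_head :: "'nt lab lab_head" where
  "reset_head = \<lparr>
     lkey = (\<lambda>l l'. case l of Pos p \<Rightarrow> if l' = l then 1 else 0 | _ \<Rightarrow> 0),
     lquery = (\<lambda>l l'. case l of Pos p \<Rightarrow> if l' = l then 1 else 0 | _ \<Rightarrow> 0),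
     lvalue = (\<lambda>l l'. case l of
        Ins A j \<Rightarrow> (if l' = Lex A j then 1 else 0) - (if l' = l then 1 else 0)
      | Out A j \<Rightarrow> if l' = l then -1 else 0
      | _ \<Rightarrow> 0)\<rparr>"

lemma reset_head_attn:
  assumes "i \<in> {1..length w}" "length w \<le> L"
  shows "lab_attn (labels L) (length w) reset_head (state_emb G w a b) i l =
    (case l of
      Ins A j \<Rightarrow> if j \<in> {1..L} then inside_base G w A i j - a A i j else 0
    | Out A j \<Rightarrow> if j \<in> {1..L} then - b A i j else 0
    | _ \<Rightarrow> 0)"
proof -
  let ?x = "state_emb G w a b"
  have pos: "lab_mvec (labels L) (lkey reset_head) (?x p) l' =
      (case l' of Pos p' \<Rightarrow> if p' \<in> {1..L} \<and> p' = p then 1 else 0 | _ \<Rightarrow> 0)"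
    "lab_mvec (labels L) (lquery reset_head) (?x p) l' = lab_mvec (labels L) (lkey reset_head) (?x p) l'" for p l'
    by (cases l'; auto simp: lab_mvec_def reset_head_def delta_simps)+
  have val: "lab_mvec (labels L) (lvalue reset_head) (?x p) l =
      (case l of
        Ins A j \<Rightarrow> if j \<in> {1..L} then inside_base G w A p j - a A p j else 0
      | Out A j \<Rightarrow> if j \<in> {1..L} then - b A p j else 0
      | _ \<Rightarrow> 0)" for p l
    by (cases l) (auto simp: lab_mvec_def reset_head_def delta_simps left_diff_distrib sum_subtractf)
  have score: "(\<Sum>l'\<in>labels L. lab_mvec (labels L) (lkey reset_head) (?x p) l' *
      lab_mvec (labels L) (lquery reset_head) (?x i) l') = (if p = i then 1 else 0)" if "p \<in> {1..L}" for p
    using that assms by (auto simp: sum_labels pos delta_simps)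
  have "lab_attn (labels L) (length w) reset_head ?x i l =
      (\<Sum>p\<in>{1..length w}. if p = i then lab_mvec (labels L) (lvalue reset_head) (?x p) l else 0)"
    unfolding lab_attn_def using assms by (intro sum.cong) (auto simp: score relu_def)
  then show ?thesis using assms by (simp add: val)
qed

text \<open>The value Pos j - Pos (j + 1) telescopes when summed over all positions, so the head detects
  the right end of the sentence, where the outside recursion starts.\<close>

definition boundary_head :: "'nt \<Rightarrow> 'nt lab lab_head" where
  "boundary_head S = \<lparr>
     lkey = (\<lambda>l l'. case (l, l') of (Pos p, Pos p') \<Rightarrow> if p = 1 then 1 else 0 | _ \<Rightarrow> 0),
     lquery = (\<lambda>l l'. case l of Pos p \<Rightarrow> if p = 1 then if l' = l then 1 else 0 else 0 | _ \<Rightarrow> 0),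
     lvalue = (\<lambda>l l'. case l of
        Out A j \<Rightarrow> if A = S then (if l' = Pos j then 1 else 0) - (if l' = Pos (j + 1) then 1 else 0) else 0
      | _ \<Rightarrow> 0)\<rparr>"

lemma boundary_head_attn:
  assumes "length w \<le> L" "l \<in> labels L"
  shows "lab_attn (labels L) (length w) (boundary_head S) (state_emb G w a b) i l =
    (case l of
      Out A j \<Rightarrow> if i = 1 \<and> j = length w \<and> A = S then 1 else 0
    | _ \<Rightarrow> 0)"
proof -
  let ?x = "state_emb G w a b" and ?h = "boundary_head S"
  have key: "lab_mvec (labels L) (lkey ?h) (?x p) l' =
      (case l' of Pos p' \<Rightarrow> if p' = 1 \<and> p \<in> {1..L} then 1 else 0 | _ \<Rightarrow> 0)" for p l'
    by (cases l') (auto simp: lab_mvec_def sum_labels boundary_head_def delta_simps)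
  have query: "lab_mvec (labels L) (lquery ?h) (?x i) l' =
      (case l' of Pos p' \<Rightarrow> if p' = 1 \<and> 1 \<le> L \<and> i = 1 then 1 else 0 | _ \<Rightarrow> 0)" for l'
    by (cases l') (auto simp: lab_mvec_def boundary_head_def delta_simps)
  have val: "lab_mvec (labels L) (lvalue ?h) (?x p) l =
      (case l of
        Out A j \<Rightarrow> if A = S
          then (if p = j then if j \<in> {1..L} then 1 else 0 else 0) -
            (if p = j + 1 then if j + 1 \<le> L then 1 else 0 else 0)
          else 0
      | _ \<Rightarrow> 0)" for p l
    by (cases l) (auto simp: lab_mvec_def boundary_head_def delta_simps left_diff_distrib sum_subtractf)
  have score: "(\<Sum>l'\<in>labels L. lab_mvec (labels L) (lkey ?h) (?x p) l' * lab_mvec (labels L) (lquery ?h) (?x i) l') =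
      (if i = 1 then 1 else 0)" if "p \<in> {1..L}" for p
    using that by (auto simp: sum_labels key query delta_simps)
  have "lab_attn (labels L) (length w) ?h ?x i l =
      (\<Sum>p\<in>{1..length w}. (if i = 1 then 1 else 0) * lab_mvec (labels L) (lvalue ?h) (?x p) l)"
    unfolding lab_attn_def using assms(1) by (intro sum.cong) (auto simp: score relu_def)
  then show ?thesis using assms
    by (cases l) (auto simp: val delta_simps sum_subtractf)
qed

definition zero_head :: "'l lab_head" where
  "zero_head = \<lparr>lkey = (\<lambda>_ _. 0), lquery = (\<lambda>_ _. 0), lvalue = (\<lambda>_ _. 0)\<rparr>"

lemma zero_head_attn: "lab_attn \<Lambda> m zero_head x i l = 0"
  by (simp add: lab_attn_def lab_mvec_def zero_head_def)

definition io_heads :: "('nt::finite) pcfg \<Rightarrow> 'nt list \<Rightarrow> 'nt lab lab_head list" where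
  "io_heads G xs = map (inside_head G) xs @ map (outside_left_head G) xs @ map (outside_right_head G) xs @
     [reset_head, boundary_head (start G)] @ replicate (length xs - 2) zero_head"

lemma length_io_heads: "2 \<le> length xs \<Longrightarrow> length (io_heads G xs) = 4 * length xs"
  by (simp add: io_heads_def)

lemma io_heads_step:
  assumes "is_pcfg G" "distinct xs" "set xs = UNIV" "length w \<le> L" "i \<in> {1..length w}" "l \<in> labels L"
    and "\<And>A i j. 0 \<le> a A i j" "\<And>A i j. 0 \<le> b A i j"
  shows "state_emb G w a b i l + (\<Sum>h\<leftarrow>io_heads G xs. lab_attn (labels L) (length w) h (state_emb G w a b) i l) =
    state_emb G w (inside_update G w a) (outside_update G L w a b) i l"
proof -
  have iL: "i \<in> {1..L}" using assms(4,5) by simp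
  have "(\<Sum>h\<leftarrow>io_heads G xs. lab_attn (labels L) (length w) h (state_emb G w a b) i l) =
      (\<Sum>B\<in>UNIV. lab_attn (labels L) (length w) (inside_head G B) (state_emb G w a b) i l) +
      (\<Sum>A\<in>UNIV. lab_attn (labels L) (length w) (outside_left_head G A) (state_emb G w a b) i l) +
      (\<Sum>C\<in>UNIV. lab_attn (labels L) (length w) (outside_right_head G C) (state_emb G w a b) i l) +
      lab_attn (labels L) (length w) reset_head (state_emb G w a b) i l +
      lab_attn (labels L) (length w) (boundary_head (start G)) (state_emb G w a b) i l"
    using assms(2,3)
    by (simp add: io_heads_def sum_list_distinct_conv_sum_set zero_head_attn sum_list_replicate)
  also have "\<dots> = state_emb G w (inside_update G w a) (outside_update G L w a b) i l - state_emb G w a b i l"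
    using assms iL
    by (cases l) (auto simp: inside_head_attn outside_left_head_attn outside_right_head_attn
        reset_head_attn boundary_head_attn inside_update_def outside_update_def delta_simps)
  finally show ?thesis by simp
qed

definition init_emb :: "('nt::finite) pcfg \<Rightarrow> nat \<Rightarrow> nat \<Rightarrow> 'nt lab \<Rightarrow> real" where
  "init_emb G v i l = (case l of
      Pos p \<Rightarrow> if p = i then 1 else 0
    | Ins A j \<Rightarrow> if j = i then lrule G A v else 0
    | Out A j \<Rightarrow> 0
    | Lex A j \<Rightarrow> if j = i then lrule G A v else 0)"

lemma init_emb_eq_state_emb:
  assumes "v = w ! (i - 1)"
  shows "init_emb G v i = state_emb G w (inside_base G w) (\<lambda>_ _ _. 0) i"
proof
  fix l
  show "init_emb G v i l = state_emb G w (inside_base G w) (\<lambda>_ _ _. 0) i l"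
    using assms by (cases l) (simp_all add: init_emb_def inside_base_def)
qed

definition io_transformer :: "('nt::finite) pcfg \<Rightarrow> nat \<Rightarrow> nat \<Rightarrow> ('nt lab \<Rightarrow> nat) \<Rightarrow> 'nt list \<Rightarrow> transformer" where
  "io_transformer G L d \<iota> xs = \<lparr>tdim = d, temb = (\<lambda>v i. lift_vec \<iota> (labels L) (init_emb G v i)),
     tlayers = replicate (2 * L - 1) (map (lift_head \<iota> (labels L)) (io_heads G xs))\<rparr>"

lemma final_emb_io_transformer:
  assumes "is_pcfg G" "distinct xs" "set xs = UNIV" "inj_on \<iota> (labels L)" "\<iota> ` labels L \<subseteq> {..<d}"
    and "length w \<le> L" "i \<in> {1..length w}"
  shows "final_emb (io_transformer G L d \<iota> xs) w i =
    lift_vec \<iota> (labels L) (state_emb G w (inside_iter G w (2 * L - 1)) (outside_iter G L w (2 * L - 1)) i)"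
proof -
  define x where "x t = state_emb G w (inside_iter G w t) (outside_iter G L w t)" for t
  have step: "x t i l + (\<Sum>h\<leftarrow>io_heads G xs. lab_attn (labels L) (length w) h (x t) i l) = x (Suc t) i l"
    if "i \<in> {1..length w}" "l \<in> labels L" for t i l
    using assms that by (simp add: x_def io_heads_step inside_iter_nonneg outside_iter_nonneg)
  have "(\<lambda>i. temb (io_transformer G L d \<iota> xs) (w ! (i - 1)) i) = (\<lambda>i. lift_vec \<iota> (labels L) (x 0 i))"
    by (simp add: io_transformer_def x_def init_emb_eq_state_emb)
  then show ?thesis
    unfolding final_emb_def using foldl_layer_step_lift[where x = x, OF assms(4,5) step assms(7)]
    by (simp add: io_transformer_def x_def)
qed

definition simulates_inside_outside :: "('nt::finite) pcfg \<Rightarrow> nat \<Rightarrow> transformer \<Rightarrow> bool" where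
  "simulates_inside_outside G L T \<longleftrightarrow>
     (\<exists>(pa :: 'nt \<Rightarrow> nat \<Rightarrow> nat \<Rightarrow> nat) (ca :: 'nt \<Rightarrow> nat \<Rightarrow> nat \<Rightarrow> nat)
        (pb :: 'nt \<Rightarrow> nat \<Rightarrow> nat \<Rightarrow> nat) (cb :: 'nt \<Rightarrow> nat \<Rightarrow> nat \<Rightarrow> nat).
       \<forall>w. generated G w \<and> length w \<le> L \<longrightarrow>
         (\<forall>A i j. 1 \<le> i \<and> i \<le> j \<and> j \<le> length w \<longrightarrow>
            1 \<le> pa A i j \<and> pa A i j \<le> length w \<and> ca A i j < tdim T \<and>
            final_emb T w (pa A i j) (ca A i j) = inside G w A i j \<and>
            1 \<le> pb A i j \<and> pb A i j \<le> length w \<and> cb A i j < tdim T \<and>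
            final_emb T w (pb A i j) (cb A i j) = outside G w A i j))"

lemma io_transformer_simulates:
  fixes G :: "('nt::finite) pcfg"
  assumes "is_pcfg G" "distinct xs" "set xs = UNIV" "inj_on \<iota> (labels L)" "\<iota> ` labels L \<subseteq> {..<d}"
  shows "simulates_inside_outside G L (io_transformer G L d \<iota> xs)"
  unfolding simulates_inside_outside_def
proof (intro exI allI impI)
  fix w and A :: 'nt and i j
  assume w: "generated G w \<and> length w \<le> L" and ij: "1 \<le> i \<and> i \<le> j \<and> j \<le> length w"
  let ?T = "io_transformer G L d \<iota> xs"
  have labels: "Ins A j \<in> labels L" "Out A j \<in> labels L" using w ij by auto
  have emb: "final_emb ?T w i (\<iota> l) =
      state_emb G w (inside_iter G w (2 * L - 1)) (outside_iter G L w (2 * L - 1)) i l" if "l \<in> labels L" for l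
    using assms w ij that by (simp add: final_emb_io_transformer lift_vec_at)
  have "inside_iter G w (2 * L - 1) A i j = inside G w A i j"
    using w ij by (intro inside_iter_eq_inside) auto
  moreover have "outside_iter G L w (2 * L - 1) A i j = outside G w A i j"
    using w ij by (intro outside_iter_eq_outside) auto
  ultimately have "final_emb ?T w i (\<iota> (Ins A j)) = inside G w A i j"
    and "final_emb ?T w i (\<iota> (Out A j)) = outside G w A i j"
    using emb[OF labels(1)] emb[OF labels(2)] by simp_all
  moreover have "\<iota> (Ins A j) < tdim ?T" "\<iota> (Out A j) < tdim ?T"
    using assms(5) labels by (auto simp: io_transformer_def image_subset_iff)
  ultimately show "1 \<le> i \<and> i \<le> length w \<and> \<iota> (Ins A j) < tdim ?T \<and> final_emb ?T w i (\<iota> (Ins A j)) = inside G w A i j \<and>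
      1 \<le> i \<and> i \<le> length w \<and> \<iota> (Out A j) < tdim ?T \<and> final_emb ?T w i (\<iota> (Out A j)) = outside G w A i j"
    using ij by simp
qed

lemma exists_io_transformer:
  fixes G :: "('nt::finite) pcfg"
  assumes "is_pcfg G" "2 \<le> card (UNIV :: 'nt set)"
  shows "\<exists>T. tdim T = (4 * card (UNIV :: 'nt set) + 1) * L \<and> length (tlayers T) = 2 * L - 1 \<and>
    (\<forall>hs \<in> set (tlayers T). length hs = 4 * card (UNIV :: 'nt set)) \<and> simulates_inside_outside G L T"
proof -
  let ?d = "(4 * card (UNIV :: 'nt set) + 1) * L"
  obtain xs :: "'nt list" where xs: "distinct xs" "set xs = UNIV"
    using finite_distinct_list[OF finite_UNIV] by blast
  have "card (labels L :: 'nt lab set) \<le> card {..<?d}"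
    using card_labels[where 'nt = 'nt, of L] by (simp add: algebra_simps)
  then obtain \<iota> :: "'nt lab \<Rightarrow> nat" where \<iota>: "inj_on \<iota> (labels L)" "\<iota> ` labels L \<subseteq> {..<?d}"
    using card_le_inj[OF finite_labels finite_lessThan] by blast
  have "length xs = card (UNIV :: 'nt set)"
    using distinct_card[OF xs(1)] xs(2) by simp
  then show ?thesis
    using assms io_transformer_simulates[OF assms(1) xs \<iota>]
    by (intro exI[of _ "io_transformer G L ?d \<iota> xs"]) (simp add: io_transformer_def length_io_heads)
qed

section \<open>Grammars with a single nonterminal\<close>

lemma card_UNIV_1_eq:
  assumes "card (UNIV :: 'a set) = 1"
  shows "(x :: 'a) = y"
proof -
  obtain z :: 'a where "UNIV = {z}" using assms by (rule card_1_singletonE)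
  then show ?thesis by (metis UNIV_I singletonD)
qed

lemma ins_len_Suc_card_1:
  fixes G :: "('nt::finite) pcfg"
  assumes "is_pcfg G" "card (UNIV :: 'nt set) = 1"
  shows "ins_len G w (Suc d) A i = 0"
proof -
  have all_eq: "B = A" for B :: 'nt
    using assms(2) by (rule card_UNIV_1_eq)
  show ?thesis
  proof (cases "A \<in> interm G")
    case False
    then have "prule G A B C = 0" for B C
      using assms(1) by (simp add: is_pcfg_def)
    then show ?thesis using all_eq by simp
  next
    case True
    then have interm: "B \<in> interm G" for B using all_eq by metis
    have "ins_len G w n B j = 0" for n B j
    proof (induction n arbitrary: B j rule: less_induct)
      case (less n)
      then show ?case
        using assms(1) interm by (cases n) (simp_all add: is_pcfg_def)
    qed
    then show ?thesis .
  qed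
qed

lemma generated_card_1:
  fixes G :: "('nt::finite) pcfg"
  assumes "is_pcfg G" "card (UNIV :: 'nt set) = 1" "generated G w"
  shows "length w = 1"
proof (rule ccontr)
  assume "length w \<noteq> 1"
  moreover have "w \<noteq> []" "inside G w (start G) 1 (length w) > 0"
    using assms(3) by (auto simp: generated_def)
  ultimately have "length w - 1 \<noteq> 0" by (cases w) auto
  then obtain d where "length w - 1 = Suc d" using not0_implies_Suc by blast
  then have "inside G w (start G) 1 (length w) = ins_len G w (Suc d) (start G) 1"
    using \<open>w \<noteq> []\<close> by (simp add: inside_def Suc_le_eq del: ins_len.simps)
  also have "\<dots> = 0"
    by (rule ins_len_Suc_card_1[OF assms(1,2)])
  finally show False using \<open>inside G w (start G) 1 (length w) > 0\<close> by simp
qed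

definition null_head :: head where
  "null_head = \<lparr>Kmat = (\<lambda>_ _. 0), Qmat = (\<lambda>_ _. 0), Vmat = (\<lambda>_ _. 0)\<rparr>"

lemma foldl_layer_step_null_heads:
  "foldl (\<lambda>e hs. layer_step d m hs e) e0 (replicate n (replicate k null_head)) = e0"
proof -
  have "layer_step d m (replicate k null_head) e = e" for e
    by (simp add: layer_step_def null_head_def mvec_def sum_list_replicate)
  then show ?thesis by (induction n) (simp_all add: replicate_append_same[symmetric])
qed

text \<open>The general construction needs 3|N| + 2 heads, one too many when |N| = 1; but then every
  generated sentence has one word, and the input embedding can already hold both tables.\<close>

lemma exists_transformer_card_1:
  fixes G :: "('nt::finite) pcfg"
  assumes "is_pcfg G" "card (UNIV :: 'nt set) = 1" "1 \<le> L"
  shows "\<exists>T. tdim T = (4 * card (UNIV :: 'nt set) + 1) * L \<and> length (tlayers T) = 2 * L - 1 \<and>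
    (\<forall>hs \<in> set (tlayers T). length hs = 4 * card (UNIV :: 'nt set)) \<and> simulates_inside_outside G L T"
proof -
  have start: "A = start G" for A :: 'nt
    using assms(2) by (rule card_UNIV_1_eq)
  define T where "T = \<lparr>tdim = 5 * L,
     temb = (\<lambda>v i c. if c = 0 then lrule G (start G) v else if c = 1 then 1 else 0),
     tlayers = replicate (2 * L - 1) (replicate 4 null_head)\<rparr>"
  have emb: "final_emb T w i = (\<lambda>c. if c = 0 then lrule G (start G) (w ! (i - 1)) else if c = 1 then 1 else 0)" for w i
    by (simp add: final_emb_def T_def foldl_layer_step_null_heads cong: if_cong)
  have "simulates_inside_outside G L T"
    unfolding simulates_inside_outside_def
  proof (intro exI allI impI)
    fix w and A :: 'nt and i j
    assume "generated G w \<and> length w \<le> L" "1 \<le> i \<and> i \<le> j \<and> j \<le> length w"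
    then have "length w = 1" "i = 1" "j = 1"
      using generated_card_1[OF assms(1,2)] by auto
    then show "1 \<le> (1::nat) \<and> 1 \<le> length w \<and> 0 < tdim T \<and> final_emb T w 1 0 = inside G w A i j \<and>
        1 \<le> (1::nat) \<and> 1 \<le> length w \<and> 1 < tdim T \<and> final_emb T w 1 1 = outside G w A i j"
      using assms(3) start[of A] by (simp add: emb inside_def outside.simps) (simp add: T_def)
  qed
  then show ?thesis
    using assms(2) by (intro exI[of _ T]) (simp add: T_def)
qed

theorem mainTheorem1:
  fixes G :: "('nt::finite) pcfg" and L :: nat
  assumes "is_pcfg G" and "L \<ge> 1"
  shows "\<exists>T :: transformer.
     tdim T = (4 * card (UNIV :: 'nt set) + 1) * L \<and>
     length (tlayers T) = 2 * L - 1 \<and>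
     (\<forall>hs \<in> set (tlayers T). length hs = 4 * card (UNIV :: 'nt set)) \<and>
     (\<exists>(pa :: 'nt \<Rightarrow> nat \<Rightarrow> nat \<Rightarrow> nat) (ca :: 'nt \<Rightarrow> nat \<Rightarrow> nat \<Rightarrow> nat)
        (pb :: 'nt \<Rightarrow> nat \<Rightarrow> nat \<Rightarrow> nat) (cb :: 'nt \<Rightarrow> nat \<Rightarrow> nat \<Rightarrow> nat).
       \<forall>w. generated G w \<and> length w \<le> L \<longrightarrow>
         (\<forall>A i j. 1 \<le> i \<and> i \<le> j \<and> j \<le> length w \<longrightarrow>
            1 \<le> pa A i j \<and> pa A i j \<le> length w \<and> ca A i j < tdim T \<and>
            final_emb T w (pa A i j) (ca A i j) = inside G w A i j \<and>
            1 \<le> pb A i j \<and> pb A i j \<le> length w \<and> cb A i j < tdim T \<and>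
            final_emb T w (pb A i j) (cb A i j) = outside G w A i j))"
proof -
  have "card (UNIV :: 'nt set) \<noteq> 0" by simp
  then consider "card (UNIV :: 'nt set) = 1" | "2 \<le> card (UNIV :: 'nt set)" by linarith
  then show ?thesis
    using exists_transformer_card_1[OF assms(1) _ assms(2)] exists_io_transformer[OF assms(1), of L]
    unfolding simulates_inside_outside_def by cases blast+
qed

end
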